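(* Let $\mathbf{A}$ be an algebra with an $m$-ary, $p$-pointed, $k$-cube term, with at least one constant symbol appearing in the cube identities (so $p\geq 1$). If $\mathbf{A}^{p+k-1}$ is finitely generated, then all finite powers of $\mathbf{A}$ are finitely generated and $d_{\mathbf{A}}(n)$ is bounded above by a polynomial of degree at most $\log_w(m)$, where $w = 2k/(2k-1)$ (i.e., $d_{\mathbf{A}}(n)\in O(n^{\log_w(m)})$).
   Context: An algebra $\mathbf{A}$ has an $m$-ary, $p$-pointed, $k$-cube term if there is a term $F(x_1,\dots,x_m)$ in the language of $\mathbf{A}$ and a $k\times m$ matrix $M=[y_{i,j}]$ whose entries are variables and constant symbols (nullary operation symbols of the language), exactly $p$ distinct constant symbols occurring, such that every column of $M$ contains an entry different from the variable $x$, and the identities $F(y_{i,1},\dots,y_{i,m})\approx x$ (the cube identities), $i=1,\dots,k$, hold in $\mathbf{A}$. $d_{\mathbf{A}}(n)$ is the least size of a generating set of $\mathbf{A}^n$. *)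

theory Defs
  imports Complex_Main "HOL-Library.Landau_Symbols"
begin

(* An algebra is given by a carrier A :: 'a set, an arity function ar :: 'f => nat
   on the operation symbols, and interpretations ops :: 'f => 'a list => 'a
   (ops f is only meaningful on argument lists of length ar f). *)

definition is_algebra :: "'a set \<Rightarrow> ('f \<Rightarrow> nat) \<Rightarrow> ('f \<Rightarrow> 'a list \<Rightarrow> 'a) \<Rightarrow> bool" where
  "is_algebra A ar ops \<longleftrightarrow> A \<noteq> {} \<and>
     (\<forall>f xs. length xs = ar f \<longrightarrow> set xs \<subseteq> A \<longrightarrow> ops f xs \<in> A)"

datatype ('f, 'v) trm = Var 'v | App 'f "('f, 'v) trm list"

fun wf_trm :: "('f \<Rightarrow> nat) \<Rightarrow> ('f, 'v) trm \<Rightarrow> bool" where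
  "wf_trm ar (Var v) = True"
| "wf_trm ar (App f ts) = (length ts = ar f \<and> (\<forall>t\<in>set ts. wf_trm ar t))"

fun vars_trm :: "('f, 'v) trm \<Rightarrow> 'v set" where
  "vars_trm (Var v) = {v}"
| "vars_trm (App f ts) = (\<Union>t\<in>set ts. vars_trm t)"

fun eval_trm :: "('f \<Rightarrow> 'a list \<Rightarrow> 'a) \<Rightarrow> ('v \<Rightarrow> 'a) \<Rightarrow> ('f, 'v) trm \<Rightarrow> 'a" where
  "eval_trm ops s (Var v) = s v"
| "eval_trm ops s (App f ts) = ops f (map (eval_trm ops s) ts)"

datatype 'f entry = EVar nat | ECon 'f

fun entry_val :: "('f \<Rightarrow> 'a list \<Rightarrow> 'a) \<Rightarrow> (nat \<Rightarrow> 'a) \<Rightarrow> 'f entry \<Rightarrow> 'a" where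
  "entry_val ops s (EVar v) = s v"
| "entry_val ops s (ECon c) = ops c []"

definition consts_of :: "nat \<Rightarrow> nat \<Rightarrow> (nat \<Rightarrow> nat \<Rightarrow> 'f entry) \<Rightarrow> 'f set" where
  "consts_of k m M = {c. \<exists>i<k. \<exists>j<m. M i j = ECon c}"

(* A has an m-ary, p-pointed, k-cube term: term F(x_0,...,x_{m-1}) (variables 0..m-1),
   k x m matrix M (rows i<k, columns j<m) of variables and constant symbols, with
   exactly p distinct constant symbols, distinguished variable x, every column
   containing an entry different from x, and the cube identities holding in A. *)
definition has_cube_term ::
  "'a set \<Rightarrow> ('f \<Rightarrow> nat) \<Rightarrow> ('f \<Rightarrow> 'a list \<Rightarrow> 'a) \<Rightarrow> nat \<Rightarrow> nat \<Rightarrow> nat \<Rightarrow> bool" where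
  "has_cube_term A ar ops m p k \<longleftrightarrow>
    (\<exists>(F :: ('f, nat) trm) (M :: nat \<Rightarrow> nat \<Rightarrow> 'f entry) (x :: nat).
       wf_trm ar F \<and> vars_trm F \<subseteq> {..<m} \<and>
       (\<forall>i<k. \<forall>j<m. \<forall>c. M i j = ECon c \<longrightarrow> ar c = 0) \<and>
       finite (consts_of k m M) \<and> card (consts_of k m M) = p \<and>
       (\<forall>j<m. \<exists>i<k. M i j \<noteq> EVar x) \<and>
       (\<forall>i<k. \<forall>s. (\<forall>v. s v \<in> A) \<longrightarrow>
            eval_trm ops (\<lambda>j. entry_val ops s (M i j)) F = s x))"

definition power_carrier :: "'a set \<Rightarrow> nat \<Rightarrow> 'a list set" where
  "power_carrier A n = {xs. length xs = n \<and> set xs \<subseteq> A}"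

inductive_set gen_power :: "('f \<Rightarrow> nat) \<Rightarrow> ('f \<Rightarrow> 'a list \<Rightarrow> 'a) \<Rightarrow> nat \<Rightarrow> 'a list set \<Rightarrow> 'a list set"
  for ar ops n G where
  base: "x \<in> G \<Longrightarrow> x \<in> gen_power ar ops n G"
| app: "length xs = ar f \<Longrightarrow> (\<forall>x\<in>set xs. x \<in> gen_power ar ops n G) \<Longrightarrow>
        map (\<lambda>l. ops f (map (\<lambda>x. x ! l) xs)) [0..<n] \<in> gen_power ar ops n G"

definition generates_power ::
  "'a set \<Rightarrow> ('f \<Rightarrow> nat) \<Rightarrow> ('f \<Rightarrow> 'a list \<Rightarrow> 'a) \<Rightarrow> nat \<Rightarrow> 'a list set \<Rightarrow> bool" where
  "generates_power A ar ops n G \<longleftrightarrow>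
     G \<subseteq> power_carrier A n \<and> gen_power ar ops n G = power_carrier A n"

definition fin_gen_power :: "'a set \<Rightarrow> ('f \<Rightarrow> nat) \<Rightarrow> ('f \<Rightarrow> 'a list \<Rightarrow> 'a) \<Rightarrow> nat \<Rightarrow> bool" where
  "fin_gen_power A ar ops n \<longleftrightarrow> (\<exists>G. finite G \<and> generates_power A ar ops n G)"

definition d_alg :: "'a set \<Rightarrow> ('f \<Rightarrow> nat) \<Rightarrow> ('f \<Rightarrow> 'a list \<Rightarrow> 'a) \<Rightarrow> nat \<Rightarrow> nat" where
  "d_alg A ar ops n = (LEAST c. \<exists>G. finite G \<and> card G = c \<and> generates_power A ar ops n G)"

end

theory Submission
  imports Defs
begin

text \<open>
  Let \<open>c\<close> be the tuple of values of the \<open>p\<close> constants of the cube identities, and call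
  \<open>H \<subseteq> A^(n+p)\<close> fibre generating if it generates every \<open>a @ c\<close> with \<open>a \<in> A^n\<close>; projecting
  away the last \<open>p\<close> coordinates turns it into a generating set of \<open>A^n\<close> of at most the same size.
  Assign coordinate \<open>l < n\<close> to row \<open>l mod k\<close> of the cube identities. As column \<open>j\<close> has an
  entry other than \<open>x\<close>, at most \<open>n - n div k\<close> coordinates see \<open>x\<close> in column \<open>j\<close>; a fibre
  generating set for that many coordinates, spread over \<open>A^(n+p)\<close> as column \<open>j\<close> prescribes,
  generates the \<open>j\<close>-th argument of the cube term, and the cube identities return \<open>a @ c\<close>.
  So fibre generating sets of size \<open>g(n) \<le> m \<cdot> g(n - n div k)\<close> exist; since
  \<open>n - n div k \<le> n / w\<close> for \<open>n \<ge> k\<close>, this gives \<open>g(n) = O(n powr log\<^sub>w m)\<close>, the finitely many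
  \<open>n < k\<close> being handled by projections of \<open>A^(p+k-1)\<close>.
\<close>

section \<open>Subuniverses of direct powers\<close>

definition reindex :: "(nat \<Rightarrow> nat) \<Rightarrow> nat \<Rightarrow> 'a list \<Rightarrow> 'a list" where
  "reindex \<psi> n z = map (\<lambda>l. z ! \<psi> l) [0..<n]"

lemma length_reindex [simp]: "length (reindex \<psi> n z) = n"
  by (simp add: reindex_def)

lemma nth_reindex [simp]: "l < n \<Longrightarrow> reindex \<psi> n z ! l = z ! \<psi> l"
  by (simp add: reindex_def)

lemma reindex_id_append: "length a = n \<Longrightarrow> reindex (\<lambda>l. l) n (a @ b) = a"
  by (rule nth_equalityI) (simp_all add: nth_append)

lemma reindex_in_power_carrier:
  assumes "\<And>l. l < n \<Longrightarrow> \<psi> l < N" and "z \<in> power_carrier A N"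
  shows "reindex \<psi> n z \<in> power_carrier A n"
  using assms by (fastforce simp: power_carrier_def in_set_conv_nth)

lemma gen_power_mono:
  assumes "G \<subseteq> G'" and "y \<in> gen_power ar ops n G"
  shows "y \<in> gen_power ar ops n G'"
  using assms(2) by induction (use assms(1) in \<open>auto intro: gen_power.intros\<close>)

lemma gen_power_subset_power_carrier:
  assumes alg: "is_algebra A ar ops" and "G \<subseteq> power_carrier A n"
  shows "gen_power ar ops n G \<subseteq> power_carrier A n"
proof
  fix y assume "y \<in> gen_power ar ops n G"
  then show "y \<in> power_carrier A n"
  proof induction
    case (base y)
    then show ?case using assms(2) by blast
  next
    case (app xs f)
    have "ops f (map (\<lambda>x. x ! l) xs) \<in> A" if "l < n" for l
    proof -
      have "set (map (\<lambda>x. x ! l) xs) \<subseteq> A"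
        using app.IH that by (fastforce simp: power_carrier_def)
      then show ?thesis using alg app.hyps(1) unfolding is_algebra_def by simp
    qed
    then show ?case by (auto simp: power_carrier_def)
  qed
qed

lemma gen_power_reindex:
  assumes "\<And>l. l < n \<Longrightarrow> \<psi> l < N" and "y \<in> gen_power ar ops N G"
  shows "reindex \<psi> n y \<in> gen_power ar ops n (reindex \<psi> n ` G)"
  using assms(2)
proof induction
  case (base y)
  then show ?case by (auto intro: gen_power.base)
next
  case (app xs f)
  have "map (\<lambda>l. ops f (map (\<lambda>x. x ! l) (map (reindex \<psi> n) xs))) [0..<n]
        \<in> gen_power ar ops n (reindex \<psi> n ` G)"
    by (rule gen_power.app) (use app in auto)
  moreover have "map (\<lambda>l. ops f (map (\<lambda>x. x ! l) (map (reindex \<psi> n) xs))) [0..<n]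
      = reindex \<psi> n (map (\<lambda>l. ops f (map (\<lambda>x. x ! l) xs)) [0..<N])"
    using assms(1) by (auto simp: reindex_def o_def)
  ultimately show ?case by simp
qed

lemma eval_trm_cong:
  "(\<And>v. v \<in> vars_trm t \<Longrightarrow> s v = s' v) \<Longrightarrow> eval_trm ops s t = eval_trm ops s' t"
proof (induction t)
  case (App f ts)
  have "map (eval_trm ops s) ts = map (eval_trm ops s') ts"
    using App by (intro map_cong) auto
  then show ?case by (metis eval_trm.simps(2))
qed simp

lemma gen_power_eval_trm:
  assumes "wf_trm ar t" and "vars_trm t \<subseteq> V"
    and "\<And>v. v \<in> V \<Longrightarrow> b v \<in> gen_power ar ops N G \<and> length (b v) = N"
  shows "map (\<lambda>l. eval_trm ops (\<lambda>v. b v ! l) t) [0..<N] \<in> gen_power ar ops N G"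
  using assms(1,2)
proof (induction t)
  case (Var v)
  then have "map (\<lambda>l. b v ! l) [0..<N] = b v"
    using assms(3) by (auto intro: nth_equalityI)
  then show ?case using assms(3) Var by simp
next
  case (App f ts)
  let ?xs = "map (\<lambda>t. map (\<lambda>l. eval_trm ops (\<lambda>v. b v ! l) t) [0..<N]) ts"
  have "map (\<lambda>l. ops f (map (\<lambda>x. x ! l) ?xs)) [0..<N] \<in> gen_power ar ops N G"
    by (rule gen_power.app) (use App in auto)
  moreover have "map (\<lambda>l. ops f (map (\<lambda>x. x ! l) ?xs)) [0..<N]
      = map (\<lambda>l. eval_trm ops (\<lambda>v. b v ! l) (App f ts)) [0..<N]"
    by (auto simp: o_def intro!: map_cong)
  ultimately show ?case by metis
qed

section \<open>Counting and the recurrence\<close>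

lemma length_filter_mod_le:
  assumes "i0 < k" and "\<not> P i0"
  shows "length (filter (\<lambda>l. P (l mod k)) [0..<n]) \<le> n - n div k"
proof -
  let ?Q = "\<lambda>l. P (l mod k)"
  have "(\<lambda>t. i0 + k * t) ` {..<n div k} \<subseteq> set (filter (\<lambda>l. \<not> ?Q l) [0..<n])"
  proof
    fix y assume "y \<in> (\<lambda>t. i0 + k * t) ` {..<n div k}"
    then obtain t where t: "t < n div k" "y = i0 + k * t" by blast
    have "k * (t + 1) \<le> k * (n div k)" using t(1) by (intro mult_le_mono2) simp
    also have "\<dots> \<le> n" by simp
    finally show "y \<in> set (filter (\<lambda>l. \<not> ?Q l) [0..<n])"
      using t(2) assms by simp
  qed
  moreover have "inj_on (\<lambda>t. i0 + k * t) {..<n div k}"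
    using assms(1) by (intro inj_onI) simp
  ultimately have "n div k \<le> card (set (filter (\<lambda>l. \<not> ?Q l) [0..<n]))"
    by (metis card_image card_lessThan card_mono finite_set)
  also have "\<dots> \<le> length (filter (\<lambda>l. \<not> ?Q l) [0..<n])"
    by (rule card_length)
  finally show ?thesis
    using sum_length_filter_compl[of ?Q "[0..<n]"] by simp
qed

lemma diff_div_le_fraction:
  fixes k n :: nat
  assumes "1 \<le> k" and "k \<le> n"
  shows "real (n - n div k) \<le> real n * ((2 * real k - 1) / (2 * real k))"
proof -
  define q where "q = n div k"
  have "1 \<le> q" using assms div_le_mono[of k n k] by (simp add: q_def)
  have "n < q * k + k"
    unfolding q_def using assms(1) mod_less_divisor[of k n] div_mult_mod_eq[of n k] by linarith
  also have "\<dots> \<le> 2 * k * q" using \<open>1 \<le> q\<close> by simp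
  finally have "real n \<le> 2 * real k * real q"
    by (metis less_imp_le of_nat_le_iff of_nat_mult of_nat_numeral)
  then have "real n / (2 * real k) \<le> real q"
    using assms(1) by (simp add: field_simps)
  moreover have "q \<le> n" by (simp add: q_def)
  ultimately show ?thesis
    using assms(1) by (simp add: q_def of_nat_diff field_simps)
qed

text \<open>
  The bound \<open>g(n) \<le> c\<close> is encoded as an upward closed predicate \<open>Q n c\<close>; \<open>n = 0\<close> is excluded
  since \<open>0 powr \<alpha> = 0\<close>. The exponent is chosen so that \<open>w powr \<alpha> = m\<close>, which absorbs the factor
  \<open>m\<close> gained when passing from \<open>n / w\<close> to \<open>n\<close>.
\<close>

lemma shrinking_recurrence_powr_bound:
  fixes Q :: "nat \<Rightarrow> real \<Rightarrow> bool" and k m n :: nat and B :: real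
  assumes "1 \<le> k" and "1 \<le> m" and "0 \<le> B"
    and upward: "\<And>n c c'. Q n c \<Longrightarrow> c \<le> c' \<Longrightarrow> Q n c'"
    and base: "\<And>n. n < k \<Longrightarrow> Q n B"
    and step: "\<And>n K. k \<le> n \<Longrightarrow> (\<And>r. r \<le> n - n div k \<Longrightarrow> Q r K) \<Longrightarrow> Q n (real m * K)"
    and "1 \<le> n"
  shows "Q n (real m * B * real n powr log (2 * real k / (2 * real k - 1)) (real m))"
proof -
  define w where "w = 2 * real k / (2 * real k - 1)"
  define \<alpha> where "\<alpha> = log w (real m)"
  define bnd where "bnd n = (if n = 0 then B else real m * B * real n powr \<alpha>)" for n
  have "w > 1" using \<open>1 \<le> k\<close> by (simp add: w_def field_simps)
  then have "\<alpha> \<ge> 0" and w_powr: "w powr \<alpha> = m"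
    using \<open>1 \<le> m\<close> by (simp_all add: \<alpha>_def)
  have mB_le_bnd: "real m * B \<le> bnd n" if "n \<noteq> 0" for n
  proof -
    have "1 \<le> real n powr \<alpha>"
      using \<open>\<alpha> \<ge> 0\<close> that by (intro ge_one_powr_ge_zero) auto
    from mult_left_mono[OF this] show ?thesis
      using that \<open>0 \<le> B\<close> by (simp add: bnd_def)
  qed
  have B_le_bnd: "B \<le> bnd n" for n
  proof (cases "n = 0")
    case False
    have "1 * B \<le> real m * B"
      using \<open>1 \<le> m\<close> \<open>0 \<le> B\<close> by (intro mult_right_mono) auto
    then show ?thesis using mB_le_bnd[OF False] by simp
  qed (simp add: bnd_def)
  have "Q n (bnd n)" for n
  proof (induction n rule: less_induct)
    case (less n)
    show ?case
    proof (cases "n < k")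
      case True
      show ?thesis using upward[OF base[OF True] B_le_bnd] .
    next
      case False
      then have "n \<noteq> 0" using \<open>1 \<le> k\<close> by simp
      define K where "K = max B (real m * B * (real n / w) powr \<alpha>)"
      have "Q r K" if "r \<le> n - n div k" for r
      proof -
        have "r < n" using that False \<open>1 \<le> k\<close> div_le_mono[of k n k] by simp
        moreover have "bnd r \<le> K"
        proof (cases "r = 0")
          case False
          have "real r \<le> real (n - n div k)"
            using that by (simp only: of_nat_le_iff)
          also have "\<dots> \<le> real n * ((2 * real k - 1) / (2 * real k))"
            using diff_div_le_fraction \<open>1 \<le> k\<close> \<open>\<not> n < k\<close> by simp
          also have "\<dots> = real n / w"
            by (simp add: w_def)
          finally have "real r powr \<alpha> \<le> (real n / w) powr \<alpha>"
            using \<open>\<alpha> \<ge> 0\<close> by (intro powr_mono2) auto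
          then have "real m * B * real r powr \<alpha> \<le> real m * B * (real n / w) powr \<alpha>"
            using \<open>0 \<le> B\<close> by (intro mult_left_mono) auto
          then show ?thesis
            using False by (simp add: bnd_def K_def)
        qed (simp add: bnd_def K_def)
        ultimately show ?thesis using less.IH upward by blast
      qed
      then have "Q n (real m * K)" using step False by simp
      moreover have "real m * K \<le> bnd n"
      proof -
        have "real m * (real m * B * (real n / w) powr \<alpha>) = bnd n"
          using \<open>n \<noteq> 0\<close> \<open>1 < w\<close> w_powr by (simp add: bnd_def powr_divide)
        then show ?thesis using mB_le_bnd[OF \<open>n \<noteq> 0\<close>] by (simp add: K_def max_def)
      qed
      ultimately show ?thesis using upward by blast
    qed
  qed
  from this[of n] show ?thesis using \<open>1 \<le> n\<close> by (simp add: bnd_def \<alpha>_def w_def)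
qed

section \<open>Generating sets from a cube term\<close>

locale cube_term =
  fixes A :: "'a set" and ar :: "'f \<Rightarrow> nat" and ops :: "'f \<Rightarrow> 'a list \<Rightarrow> 'a"
    and m k p :: nat and F :: "('f, nat) trm" and M :: "nat \<Rightarrow> nat \<Rightarrow> 'f entry"
    and x :: nat and cs :: "'f list"
  assumes alg: "is_algebra A ar ops"
    and wf_F: "wf_trm ar F" and vars_F: "vars_trm F \<subseteq> {..<m}"
    and cube_identity:
      "\<And>i s. i < k \<Longrightarrow> (\<And>v. s v \<in> A) \<Longrightarrow> eval_trm ops (\<lambda>j. entry_val ops s (M i j)) F = s x"
    and consts_in_cs: "\<And>i j c. i < k \<Longrightarrow> j < m \<Longrightarrow> M i j = ECon c \<Longrightarrow> c \<in> set cs"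
    and cs_nullary: "\<And>c. c \<in> set cs \<Longrightarrow> ar c = 0"
    and length_cs: "length cs = p" and p_pos: "1 \<le> p" and m_pos: "1 \<le> m"
    and column_not_x: "\<And>j. j < m \<Longrightarrow> \<exists>i<k. M i j \<noteq> EVar x"
begin

lemma k_pos: "1 \<le> k"
  using column_not_x[of 0] m_pos by auto

definition const_tuple :: "'a list" where
  "const_tuple = map (\<lambda>c. ops c []) cs"

lemma length_const_tuple [simp]: "length const_tuple = p"
  by (simp add: const_tuple_def length_cs)

lemma const_tuple_in_A: "set const_tuple \<subseteq> A"
  using alg cs_nullary unfolding const_tuple_def is_algebra_def by fastforce

definition fibre_generating :: "nat \<Rightarrow> 'a list set \<Rightarrow> bool" where
  "fibre_generating n H \<longleftrightarrow> finite H \<and> H \<subseteq> power_carrier A (n + p) \<and>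
     (\<forall>a \<in> power_carrier A n. a @ const_tuple \<in> gen_power ar ops (n + p) H)"

lemma generating_set_of_fibre_generating:
  assumes "fibre_generating n H"
  shows "\<exists>G. finite G \<and> generates_power A ar ops n G \<and> card G \<le> card H"
proof -
  let ?G = "reindex (\<lambda>l. l) n ` H"
  have H: "finite H" "H \<subseteq> power_carrier A (n + p)"
    "\<And>a. a \<in> power_carrier A n \<Longrightarrow> a @ const_tuple \<in> gen_power ar ops (n + p) H"
    using assms by (auto simp: fibre_generating_def)
  have G: "?G \<subseteq> power_carrier A n"
    using H(2) by (auto intro: reindex_in_power_carrier[where N = "n + p"])
  have "a \<in> gen_power ar ops n ?G" if "a \<in> power_carrier A n" for a
    using gen_power_reindex[of n "\<lambda>l. l" "n + p", OF _ H(3)[OF that]] that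
    by (simp add: power_carrier_def reindex_id_append)
  then have "generates_power A ar ops n ?G"
    using G gen_power_subset_power_carrier[OF alg G] by (auto simp: generates_power_def)
  then show ?thesis using H(1) card_image_le by blast
qed

lemma fibre_generating_of_generates_power:
  assumes "finite G" and "generates_power A ar ops N G" and "n + p \<le> N"
  shows "\<exists>H. fibre_generating n H \<and> card H \<le> card G"
proof -
  let ?H = "reindex (\<lambda>l. l) (n + p) ` G"
  obtain e where "e \<in> A" using alg by (auto simp: is_algebra_def)
  have "a @ const_tuple \<in> gen_power ar ops (n + p) ?H" if a: "a \<in> power_carrier A n" for a
  proof -
    define z where "z = (a @ const_tuple) @ replicate (N - (n + p)) e"
    have "z \<in> power_carrier A N"
      using a assms(3) \<open>e \<in> A\<close> const_tuple_in_A by (auto simp: z_def power_carrier_def)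
    then have "z \<in> gen_power ar ops N G"
      using assms(2) by (simp add: generates_power_def)
    moreover have "reindex (\<lambda>l. l) (n + p) z = a @ const_tuple"
      using a unfolding z_def by (intro reindex_id_append) (simp add: power_carrier_def)
    ultimately show ?thesis
      using gen_power_reindex[of "n + p" "\<lambda>l. l" N] assms(3) by fastforce
  qed
  moreover have "?H \<subseteq> power_carrier A (n + p)"
    using assms(2,3) by (auto simp: generates_power_def intro: reindex_in_power_carrier[where N = N])
  ultimately have "fibre_generating n ?H"
    using assms(1) by (simp add: fibre_generating_def)
  then show ?thesis using assms(1) card_image_le by blast
qed

text \<open>
  Coordinate \<open>l < n\<close> of \<open>A\<^sup>n\<close> is governed by row \<open>l mod k\<close> of the cube identities; the last
  \<open>p\<close> coordinates, which hold the constants, by row \<open>0\<close>.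
\<close>

definition row :: "nat \<Rightarrow> nat \<Rightarrow> nat" where
  "row n l = (if l < n then l mod k else 0)"

definition x_positions :: "nat \<Rightarrow> nat \<Rightarrow> nat list" where
  "x_positions n j = filter (\<lambda>l. M (l mod k) j = EVar x) [0..<n]"

lemma length_x_positions:
  assumes "j < m"
  shows "length (x_positions n j) \<le> n - n div k"
proof -
  obtain i0 where "i0 < k" and "M i0 j \<noteq> EVar x" using column_not_x[OF assms] by blast
  then show ?thesis
    using length_filter_mod_le[of i0 k "\<lambda>i. M i j = EVar x" n] by (simp add: x_positions_def)
qed

definition const_index :: "'f \<Rightarrow> nat" where
  "const_index c = (SOME t. t < p \<and> cs ! t = c)"

lemma const_index_nth: "c \<in> set cs \<Longrightarrow> const_index c < p \<and> cs ! const_index c = c"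
  unfolding const_index_def by (rule someI_ex) (metis in_set_conv_nth length_cs)

text \<open>
  The \<open>j\<close>-th argument of the cube term is the image of \<open>seed n j a\<close> under the coordinate map
  \<open>slot n j\<close>. Variables other than \<open>x\<close> are evaluated at the first constant, which exists as
  \<open>p \<ge> 1\<close>.
\<close>

definition seed :: "nat \<Rightarrow> nat \<Rightarrow> 'a list \<Rightarrow> 'a list" where
  "seed n j a = reindex (\<lambda>i. x_positions n j ! i) (length (x_positions n j)) a @ const_tuple"

definition x_slot :: "nat \<Rightarrow> nat \<Rightarrow> nat \<Rightarrow> nat" where
  "x_slot n j l = (if l < n then (SOME i. i < length (x_positions n j) \<and> x_positions n j ! i = l)
                   else length (x_positions n j) + (l - n))"

definition slot :: "nat \<Rightarrow> nat \<Rightarrow> nat \<Rightarrow> nat" where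
  "slot n j l = (case M (row n l) j of
      EVar v \<Rightarrow> if v = x then x_slot n j l else length (x_positions n j)
    | ECon c \<Rightarrow> length (x_positions n j) + const_index c)"

definition valuation :: "'a \<Rightarrow> nat \<Rightarrow> 'a" where
  "valuation u v = (if v = x then u else const_tuple ! 0)"

lemma valuation_in_A: "u \<in> A \<Longrightarrow> valuation u v \<in> A"
  using const_tuple_in_A p_pos by (auto simp: valuation_def)

lemma seed_x_slot:
  assumes "M (row n l) j = EVar x" and "l < n + p" and "length a = n"
  shows "x_slot n j l < length (x_positions n j) + p \<and>
         seed n j a ! x_slot n j l = (a @ const_tuple) ! l"
proof (cases "l < n")
  case True
  then have "l \<in> set (x_positions n j)"
    using assms(1) by (simp add: x_positions_def row_def)
  then have "\<exists>i. i < length (x_positions n j) \<and> x_positions n j ! i = l"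
    by (simp add: in_set_conv_nth)
  from someI_ex[OF this] show ?thesis
    using True assms(3) by (simp add: x_slot_def seed_def nth_append)
next
  case False
  then show ?thesis using assms(2,3) by (auto simp: x_slot_def seed_def nth_append)
qed

lemma seed_slot:
  assumes "j < m" and "l < n + p" and "length a = n"
  shows "slot n j l < length (x_positions n j) + p \<and>
         seed n j a ! slot n j l = entry_val ops (valuation ((a @ const_tuple) ! l)) (M (row n l) j)"
proof (cases "M (row n l) j")
  case (EVar v)
  show ?thesis
  proof (cases "v = x")
    case True
    then show ?thesis using seed_x_slot[OF _ assms(2,3)] EVar by (simp add: slot_def valuation_def)
  next
    case False
    then show ?thesis using EVar p_pos by (simp add: slot_def valuation_def seed_def nth_append)
  qed
next
  case (ECon c)
  have "row n l < k" using k_pos by (simp add: row_def)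
  then have "c \<in> set cs" using consts_in_cs ECon assms(1) by blast
  then show ?thesis
    using ECon const_index_nth[of c]
    by (simp add: slot_def seed_def nth_append const_tuple_def length_cs)
qed

lemma cube_term_columns:
  assumes "a \<in> power_carrier A n" and "l < n + p"
  shows "eval_trm ops (\<lambda>j. reindex (slot n j) (n + p) (seed n j a) ! l) F = (a @ const_tuple) ! l"
proof -
  have u: "(a @ const_tuple) ! l \<in> A"
    using assms const_tuple_in_A by (auto simp: power_carrier_def nth_append)
  have "eval_trm ops (\<lambda>j. reindex (slot n j) (n + p) (seed n j a) ! l) F
      = eval_trm ops (\<lambda>j. entry_val ops (valuation ((a @ const_tuple) ! l)) (M (row n l) j)) F"
    using vars_F seed_slot[OF _ assms(2)] assms by (intro eval_trm_cong) (auto simp: power_carrier_def)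
  also have "\<dots> = (a @ const_tuple) ! l"
    using cube_identity[of "row n l"] k_pos valuation_in_A[OF u]
    by (simp add: row_def valuation_def)
  finally show ?thesis .
qed

lemma fibre_generating_step:
  assumes Hs: "\<And>r. r \<le> n - n div k \<Longrightarrow> fibre_generating r (Hs r)"
  shows "fibre_generating n (\<Union>j<m. reindex (slot n j) (n + p) ` Hs (length (x_positions n j)))"
    (is "fibre_generating n ?H")
proof -
  have Hj: "fibre_generating (length (x_positions n j)) (Hs (length (x_positions n j)))"
    if "j < m" for j
    using Hs length_x_positions[OF that] by blast
  have slot_lt: "\<And>j l. j < m \<Longrightarrow> l < n + p \<Longrightarrow> slot n j l < length (x_positions n j) + p"
    using seed_slot[where a = "replicate n undefined"] by simp
  have "?H \<subseteq> power_carrier A (n + p)"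
  proof (intro UN_least image_subsetI)
    fix j z assume "j \<in> {..<m}" and "z \<in> Hs (length (x_positions n j))"
    then show "reindex (slot n j) (n + p) z \<in> power_carrier A (n + p)"
      using Hj slot_lt unfolding fibre_generating_def
      by (intro reindex_in_power_carrier[where N = "length (x_positions n j) + p"]) auto
  qed
  moreover have "a @ const_tuple \<in> gen_power ar ops (n + p) ?H" if a: "a \<in> power_carrier A n" for a
  proof -
    have "reindex (slot n j) (n + p) (seed n j a) \<in> gen_power ar ops (n + p) ?H" if j: "j < m" for j
    proof -
      have "x_positions n j ! i < n" if "i < length (x_positions n j)" for i
        using nth_mem[OF that] by (simp add: x_positions_def)
      then have "reindex (\<lambda>i. x_positions n j ! i) (length (x_positions n j)) a
                 \<in> power_carrier A (length (x_positions n j))"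
        using a by (intro reindex_in_power_carrier) (auto simp: power_carrier_def)
      then have "seed n j a \<in> gen_power ar ops (length (x_positions n j) + p) (Hs (length (x_positions n j)))"
        using Hj[OF j] by (simp add: fibre_generating_def seed_def)
      from gen_power_reindex[OF slot_lt[OF j] this]
      show ?thesis by (rule gen_power_mono[rotated]) (use j in auto)
    qed
    then have "map (\<lambda>l. eval_trm ops (\<lambda>j. reindex (slot n j) (n + p) (seed n j a) ! l) F) [0..<n + p]
               \<in> gen_power ar ops (n + p) ?H"
      using wf_F vars_F by (intro gen_power_eval_trm) auto
    moreover have "map (\<lambda>l. eval_trm ops (\<lambda>j. reindex (slot n j) (n + p) (seed n j a) ! l) F) [0..<n + p]
                   = a @ const_tuple"
      using cube_term_columns[OF a] a by (intro nth_equalityI) (auto simp: power_carrier_def)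
    ultimately show ?thesis by simp
  qed
  moreover have "finite ?H" using Hj by (auto simp: fibre_generating_def)
  ultimately show ?thesis by (simp add: fibre_generating_def)
qed

lemma fibre_generating_recurrence:
  fixes K :: real
  assumes "\<And>r. r \<le> n - n div k \<Longrightarrow> \<exists>H. fibre_generating r H \<and> real (card H) \<le> K"
  shows "\<exists>H. fibre_generating n H \<and> real (card H) \<le> real m * K"
proof -
  define Hs where "Hs r = (SOME H. fibre_generating r H \<and> real (card H) \<le> K)" for r
  have Hs: "fibre_generating r (Hs r) \<and> real (card (Hs r)) \<le> K" if "r \<le> n - n div k" for r
    unfolding Hs_def by (rule someI_ex) (use assms that in blast)
  then have Hj: "fibre_generating (length (x_positions n j)) (Hs (length (x_positions n j))) \<and>
      real (card (Hs (length (x_positions n j)))) \<le> K" if "j < m" for j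
    using length_x_positions[OF that] by blast
  let ?H = "\<Union>j<m. reindex (slot n j) (n + p) ` Hs (length (x_positions n j))"
  have "card ?H \<le> (\<Sum>j<m. card (reindex (slot n j) (n + p) ` Hs (length (x_positions n j))))"
    by (rule card_UN_le) simp
  also have "\<dots> \<le> (\<Sum>j<m. card (Hs (length (x_positions n j))))"
    by (intro sum_mono card_image_le) (use Hj in \<open>auto simp: fibre_generating_def\<close>)
  finally have "real (card ?H) \<le> (\<Sum>j<m. real (card (Hs (length (x_positions n j)))))"
    by (simp only: of_nat_le_iff flip: of_nat_sum)
  also have "\<dots> \<le> (\<Sum>j<m. K)"
    using Hj by (intro sum_mono) auto
  finally show ?thesis
    using fibre_generating_step[where Hs = Hs] Hs by auto
qed

lemma d_alg_powr_bound:
  assumes "finite G0" and "generates_power A ar ops (p + k - 1) G0" and "1 \<le> n"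
  shows "fin_gen_power A ar ops n \<and>
         real (d_alg A ar ops n) \<le> real m * real (card G0) * real n powr log (2 * real k / (2 * real k - 1)) (real m)"
proof -
  let ?Q = "\<lambda>n c. \<exists>H. fibre_generating n H \<and> real (card H) \<le> c"
  have "?Q n (real m * real (card G0) * real n powr log (2 * real k / (2 * real k - 1)) (real m))"
  proof (rule shrinking_recurrence_powr_bound[OF k_pos m_pos])
    show "?Q n (card G0)" if "n < k" for n
      using fibre_generating_of_generates_power[OF assms(1,2)] that by fastforce
    show "?Q n (real m * K)" if "k \<le> n" and "\<And>r. r \<le> n - n div k \<Longrightarrow> ?Q r K" for n K
      using fibre_generating_recurrence that by blast
  qed (use assms(3) in \<open>auto intro: order_trans\<close>)
  then obtain H where H: "fibre_generating n H"
    "real (card H) \<le> real m * real (card G0) * real n powr log (2 * real k / (2 * real k - 1)) (real m)"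
    by blast
  obtain G where G: "finite G" "generates_power A ar ops n G" "card G \<le> card H"
    using generating_set_of_fibre_generating[OF H(1)] by blast
  moreover have "d_alg A ar ops n \<le> card G"
    unfolding d_alg_def by (rule Least_le) (use G in blast)
  ultimately show ?thesis
    using G H(2) unfolding fin_gen_power_def by (meson of_nat_le_iff order_trans)
qed

end

theorem theorem5p5:
  fixes A :: "'a set" and ar :: "'f \<Rightarrow> nat" and ops :: "'f \<Rightarrow> 'a list \<Rightarrow> 'a"
    and m p k :: nat
  assumes "is_algebra A ar ops"
    and "has_cube_term A ar ops m p k"
    and "p \<ge> 1"
    and "fin_gen_power A ar ops (p + k - 1)"
  shows "(\<forall>n. fin_gen_power A ar ops n) \<and>
         (\<lambda>n. real (d_alg A ar ops n)) \<in>
            O(\<lambda>n. real n powr log (2 * real k / (2 * real k - 1)) (real m))"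
proof -
  obtain F :: "('f, nat) trm" and M x where F: "wf_trm ar F" "vars_trm F \<subseteq> {..<m}"
    and M: "\<forall>i<k. \<forall>j<m. \<forall>c. M i j = ECon c \<longrightarrow> ar c = 0"
      "finite (consts_of k m M)" "card (consts_of k m M) = p" "\<forall>j<m. \<exists>i<k. M i j \<noteq> EVar x"
    and cube: "\<forall>i<k. \<forall>s. (\<forall>v. s v \<in> A) \<longrightarrow> eval_trm ops (\<lambda>j. entry_val ops s (M i j)) F = s x"
    using assms(2) unfolding has_cube_term_def by blast
  obtain cs where cs: "distinct cs" "set cs = consts_of k m M"
    using finite_distinct_list[OF M(2)] by blast
  have "consts_of k m M \<noteq> {}" using M(3) assms(3) by auto
  then have "1 \<le> m" by (auto simp: consts_of_def)
  have "length cs = p" using cs M(3) distinct_card by metis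
  interpret cube_term A ar ops m k p F M x cs
  proof
    show "\<And>i j c. i < k \<Longrightarrow> j < m \<Longrightarrow> M i j = ECon c \<Longrightarrow> c \<in> set cs"
      using cs(2) by (auto simp: consts_of_def)
    show "\<And>c. c \<in> set cs \<Longrightarrow> ar c = 0"
      using cs(2) M(1) by (auto simp: consts_of_def)
  qed (use assms(1,3) F M(4) cube \<open>length cs = p\<close> \<open>1 \<le> m\<close> in auto)
  obtain G0 where G0: "finite G0" "generates_power A ar ops (p + k - 1) G0"
    using assms(4) unfolding fin_gen_power_def by blast
  note bound = d_alg_powr_bound[OF G0]
  have "fin_gen_power A ar ops n" for n
  proof (cases "n = 0")
    case True
    have "0 + p \<le> p + k - 1" using k_pos by simp
    then obtain H where "fibre_generating 0 H"
      using fibre_generating_of_generates_power[OF G0] by blast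
    then show ?thesis
      using True generating_set_of_fibre_generating unfolding fin_gen_power_def by blast
  qed (use bound in simp)
  moreover have "\<forall>\<^sub>F n in at_top. norm (real (d_alg A ar ops n))
      \<le> real m * real (card G0) * norm (real n powr log (2 * real k / (2 * real k - 1)) (real m))"
    unfolding eventually_at_top_linorder using bound by (intro exI[of _ 1]) auto
  then have "(\<lambda>n. real (d_alg A ar ops n)) \<in>
      O(\<lambda>n. real n powr log (2 * real k / (2 * real k - 1)) (real m))"
    by (rule bigoI)
  ultimately show ?thesis by blast
qed

end
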